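(* Let $a=\{a_k\}_{k=0}^\infty$ be a log-convex sequence with $1=a_0>a_1\geq a_2\geq\cdots$, $\lim_{k\to\infty}a_k=0$ and $\sum_{k=0}^\infty a_k=\infty$. Define $\{b_k\}_{k=0}^\infty$ by $b_0=1/a_0$ and $b_k=-\frac{1}{a_0}\sum_{j=0}^{k-1}a_{k-j}b_j$ for $k\geq1$ (the entries of the inverse of the half-infinite lower triangular Toeplitz matrix $A$ with $A_{ij}=a_{i-j}$ for $i\geq j$). Then $\sum_{k=0}^\infty|b_k|=2$; in particular the inverse matrix has summable entries.
   Context: A sequence $\{a_k\}_{k\ge0}$ is log-convex if $a_k\geq0$ for all $k$ and $a_k^2\leq a_{k-1}a_{k+1}$ for all $k\geq1$. *)

theory Defs
  imports "HOL-Analysis.Analysis"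
begin

definition log_convex :: "(nat \<Rightarrow> real) \<Rightarrow> bool" where
  "log_convex a \<longleftrightarrow> (\<forall>k. a k \<ge> 0) \<and> (\<forall>k\<ge>1. (a k)\<^sup>2 \<le> a (k - 1) * a (k + 1))"

end

theory Submission
  imports Defs
begin

text \<open>Write \<open>b\<close> for the convolution inverse of \<open>a\<close>, \<open>S N = \<Sum>j\<le>N. b j\<close> and
  \<open>A N = \<Sum>i\<le>N. a i\<close>. Log-convexity makes \<open>a (k+1) / a k\<close> increasing, and Kaluza's argument
  then shows \<open>b k \<le> 0\<close> for \<open>k \<ge> 1\<close>; hence \<open>\<Sum>k\<le>N. \<bar>b k\<bar> = 2 - S N\<close>.
  Since \<open>a\<close> decreases, \<open>0 = \<Sum>j\<le>N. a (N-j) b j \<le> a N S N\<close>, so \<open>S N \<ge> 0\<close>; and since \<open>A\<close>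
  increases, \<open>A N S N \<le> \<Sum>j\<le>N. b j A (N-j) = 1\<close>. As \<open>A N \<rightarrow> \<infinity>\<close>, this forces \<open>S N \<rightarrow> 0\<close>.\<close>

definition convolution_inverse :: "(nat \<Rightarrow> real) \<Rightarrow> (nat \<Rightarrow> real) \<Rightarrow> bool" where
  "convolution_inverse a b \<longleftrightarrow> (\<forall>n. (\<Sum>j\<le>n. a (n - j) * b j) = (if n = 0 then 1 else 0))"

lemma convolution_inverseI_recursion:
  fixes a b :: "nat \<Rightarrow> real"
  assumes "a 0 \<noteq> 0" and "b 0 = 1 / a 0"
    and "\<And>k. k \<ge> 1 \<Longrightarrow> b k = - (1 / a 0) * (\<Sum>j<k. a (k - j) * b j)"
  shows "convolution_inverse a b"
  unfolding convolution_inverse_def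
proof
  fix n
  have "(\<Sum>j\<le>n. a (n - j) * b j) = a 0 * b n + (\<Sum>j<n. a (n - j) * b j)"
    by (simp add: lessThan_Suc_atMost[symmetric])
  then show "(\<Sum>j\<le>n. a (n - j) * b j) = (if n = 0 then 1 else 0)"
    using assms by (cases "n = 0") auto
qed

lemma positive_if_decseq_not_summable:
  fixes a :: "nat \<Rightarrow> real"
  assumes "decseq a" and "\<And>k. a k \<ge> 0" and "\<not> summable a"
  shows "a k > 0"
proof (rule ccontr)
  assume "\<not> a k > 0"
  then have "a (m + k) = 0" for m
    using assms(1,2) by (metis antisym decseqD le_add2 not_le)
  then have "summable (\<lambda>m. a (m + k))" by simp
  with assms(3) show False by (simp add: summable_iff_shift)
qed

lemma log_convex_ratio_mono:
  fixes a :: "nat \<Rightarrow> real"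
  assumes "log_convex a" and pos: "\<And>k. a k > 0" and "m \<le> n"
  shows "a n * a (Suc m) \<le> a (Suc n) * a m"
proof -
  define r where "r k = a (Suc k) / a k" for k
  have "incseq r"
  proof (rule incseq_SucI)
    fix k
    have "(a (Suc k))\<^sup>2 \<le> a k * a (Suc (Suc k))"
      using assms(1) unfolding log_convex_def by (metis Suc_eq_plus1 diff_Suc_1 le_add2)
    then show "r k \<le> r (Suc k)"
      unfolding r_def using pos[of k] pos[of "Suc k"]
      by (simp add: divide_simps power2_eq_square mult.commute)
  qed
  then have "r m \<le> r n" using \<open>m \<le> n\<close> by (simp add: incseqD)
  then show ?thesis
    unfolding r_def using pos[of m] pos[of n] by (simp add: divide_simps mult.commute)
qed

text \<open>In the induction step, \<open>a m\<close> times the defining relation at \<open>m+1\<close> minus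
  \<open>a (m+1)\<close> times the one at \<open>m\<close> eliminates the \<open>b 0\<close> term and leaves coefficients of sign
  fixed by the ratio monotonicity.\<close>

lemma convolution_inverse_nonpos:
  fixes a b :: "nat \<Rightarrow> real"
  assumes "log_convex a" and pos: "\<And>k. a k > 0" and inv: "convolution_inverse a b"
    and "n \<ge> 1"
  shows "b n \<le> 0"
  using \<open>n \<ge> 1\<close>
proof (induction n rule: less_induct)
  case (less n)
  have rel: "(\<Sum>j\<le>k. a (k - j) * b j) = (if k = 0 then 1 else 0)" for k
    using inv unfolding convolution_inverse_def by blast
  obtain m where n: "n = Suc m" using less.prems by (cases n) auto
  have b0: "a 0 * b 0 = 1" using rel[of 0] by simp
  have step: "a 0 * b (Suc m) = - (\<Sum>j\<le>m. a (Suc m - j) * b j)"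
    using rel[of "Suc m"] by simp
  show ?case
  proof (cases "m = 0")
    case True
    have "a 0 * b 1 = - a 1 * b 0" using step True by simp
    moreover have "b 0 > 0" using b0 pos[of 0] by (metis zero_less_mult_iff zero_less_one not_less_iff_gr_or_eq)
    ultimately have "a 0 * b 1 \<le> 0" using pos[of 1] by simp
    then show ?thesis using pos[of 0] n True by (simp add: mult_le_0_iff)
  next
    case False
    have "a m * (a 0 * b (Suc m))
        = a m * (a 0 * b (Suc m)) + a (Suc m) * (\<Sum>j\<le>m. a (m - j) * b j)"
      using rel[of m] False by simp
    also have "\<dots> = (\<Sum>j\<le>m. (a (Suc m) * a (m - j) - a m * a (Suc m - j)) * b j)"
      using step by (simp add: sum_distrib_left sum_subtractf left_diff_distrib algebra_simps)
    also have "\<dots> \<le> 0"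
    proof (rule sum_nonpos)
      fix j assume "j \<in> {..m}"
      then have "j \<le> m" by simp
      show "(a (Suc m) * a (m - j) - a m * a (Suc m - j)) * b j \<le> 0"
      proof (cases "j = 0")
        case False
        have "a m * a (Suc (m - j)) \<le> a (Suc m) * a (m - j)"
          using log_convex_ratio_mono[OF assms(1) pos, of "m - j" m] by simp
        moreover have "b j \<le> 0" using less.IH False \<open>j \<le> m\<close> n by simp
        ultimately show ?thesis using \<open>j \<le> m\<close> by (simp add: Suc_diff_le mult_nonneg_nonpos)
      qed simp
    qed
    finally show ?thesis using pos[of m] pos[of 0] n by (simp add: mult_le_0_iff)
  qed
qed

lemma convolution_inverse_partial_sums_nonneg:
  fixes a b :: "nat \<Rightarrow> real"
  assumes "decseq a" and pos: "\<And>k. a k > 0" and inv: "convolution_inverse a b"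
    and nonpos: "\<And>k. k \<ge> 1 \<Longrightarrow> b k \<le> 0"
  shows "(\<Sum>j\<le>N. b j) \<ge> 0"
proof -
  have "0 \<le> (\<Sum>j\<le>N. a (N - j) * b j)"
    using inv unfolding convolution_inverse_def by simp
  also have "\<dots> \<le> (\<Sum>j\<le>N. a N * b j)"
  proof (rule sum_mono)
    fix j assume "j \<in> {..N}"
    show "a (N - j) * b j \<le> a N * b j"
    proof (cases "j = 0")
      case False
      have "a N \<le> a (N - j)" using \<open>decseq a\<close> by (simp add: decseqD)
      then show ?thesis using nonpos[of j] False by (simp add: mult_right_mono_neg)
    qed simp
  qed
  also have "\<dots> = a N * (\<Sum>j\<le>N. b j)" by (simp add: sum_distrib_left)
  finally show ?thesis using pos[of N] by (simp add: zero_le_mult_iff)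
qed

lemma sum_convolution_eq_sum_partial_sums:
  fixes a b :: "nat \<Rightarrow> real"
  shows "(\<Sum>n\<le>N. \<Sum>j\<le>n. a (n - j) * b j) = (\<Sum>j\<le>N. b j * (\<Sum>i\<le>N - j. a i))"
proof (induction N)
  case (Suc N)
  have "(\<Sum>j\<le>Suc N. b j * (\<Sum>i\<le>Suc N - j. a i))
      = (\<Sum>j\<le>N. b j * (\<Sum>i\<le>N - j. a i) + a (Suc N - j) * b j) + a 0 * b (Suc N)"
    by (simp add: Suc_diff_le algebra_simps)
  then show ?case using Suc.IH by (simp add: sum.distrib)
qed simp

lemma convolution_inverse_sum_partial_sums:
  assumes "convolution_inverse a b"
  shows "(\<Sum>j\<le>N. b j * (\<Sum>i\<le>N - j. a i)) = 1"
  using assms unfolding sum_convolution_eq_sum_partial_sums[symmetric] convolution_inverse_def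
  by (simp add: sum.atMost_shift del: sum.atMost_Suc)

lemma convolution_inverse_partial_sums_bound:
  fixes a b :: "nat \<Rightarrow> real"
  assumes "\<And>k. a k \<ge> 0" and inv: "convolution_inverse a b"
    and nonpos: "\<And>k. k \<ge> 1 \<Longrightarrow> b k \<le> 0"
  shows "(\<Sum>i\<le>N. a i) * (\<Sum>j\<le>N. b j) \<le> 1"
proof -
  have "(\<Sum>i\<le>N. a i) * (\<Sum>j\<le>N. b j) = (\<Sum>j\<le>N. b j * (\<Sum>i\<le>N. a i))"
    by (simp add: sum_distrib_left mult.commute)
  also have "\<dots> \<le> (\<Sum>j\<le>N. b j * (\<Sum>i\<le>N - j. a i))"
  proof (rule sum_mono)
    fix j assume "j \<in> {..N}"
    show "b j * (\<Sum>i\<le>N. a i) \<le> b j * (\<Sum>i\<le>N - j. a i)"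
    proof (cases "j = 0")
      case False
      have "(\<Sum>i\<le>N - j. a i) \<le> (\<Sum>i\<le>N. a i)"
        by (rule sum_mono2) (auto simp: assms(1))
      then show ?thesis using nonpos[of j] False by (simp add: mult_left_mono_neg)
    qed simp
  qed
  also have "\<dots> = 1" using inv by (rule convolution_inverse_sum_partial_sums)
  finally show ?thesis .
qed

lemma partial_sums_tendsto_zero_if_not_summable:
  fixes a b :: "nat \<Rightarrow> real"
  assumes "\<And>k. a k \<ge> 0" and "\<not> summable a"
    and S_nonneg: "\<And>N. (\<Sum>j\<le>N. b j) \<ge> 0"
    and nonpos: "\<And>k. k \<ge> 1 \<Longrightarrow> b k \<le> 0"
    and bound: "\<And>N. (\<Sum>i\<le>N. a i) * (\<Sum>j\<le>N. b j) \<le> 1"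
  shows "(\<lambda>N. \<Sum>j\<le>N. b j) \<longlonglongrightarrow> 0"
proof -
  have "decseq (\<lambda>N. \<Sum>j\<le>N. b j)"
    by (rule decseq_SucI) (simp add: nonpos)
  then obtain L where L: "(\<lambda>N. \<Sum>j\<le>N. b j) \<longlonglongrightarrow> L" "\<And>N. L \<le> (\<Sum>j\<le>N. b j)"
    using decseq_convergent[of _ 0] S_nonneg by blast
  have "L \<le> 0"
  proof (rule ccontr)
    assume "\<not> L \<le> 0"
    have "(\<Sum>i\<le>N. a i) \<le> 1 / L" for N
    proof -
      have "(\<Sum>i\<le>N. a i) * L \<le> (\<Sum>i\<le>N. a i) * (\<Sum>j\<le>N. b j)"
        using L(2) by (intro mult_left_mono) (auto simp: assms(1) sum_nonneg)
      then show ?thesis using bound[of N] \<open>\<not> L \<le> 0\<close> by (simp add: divide_simps)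
    qed
    then have "summable a" by (rule bounded_imp_summable[OF assms(1)])
    with assms(2) show False by blast
  qed
  moreover have "L \<ge> 0" using L(1) S_nonneg by (meson LIMSEQ_le_const)
  ultimately show ?thesis using L(1) by simp
qed

lemma abs_sums_if_tail_nonpos:
  fixes b :: "nat \<Rightarrow> real"
  assumes "\<And>k. k \<ge> 1 \<Longrightarrow> b k \<le> 0" and "b 0 \<ge> 0"
    and "(\<lambda>N. \<Sum>j\<le>N. b j) \<longlonglongrightarrow> L"
  shows "(\<lambda>k. \<bar>b k\<bar>) sums (2 * b 0 - L)"
proof -
  have partial: "(\<Sum>k\<le>N. \<bar>b k\<bar>) = 2 * b 0 - (\<Sum>j\<le>N. b j)" for N
    by (induction N) (use assms(1,2) in auto)
  have "(\<lambda>N. 2 * b 0 - (\<Sum>j\<le>N. b j)) \<longlonglongrightarrow> 2 * b 0 - L"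
    using assms(3) by (intro tendsto_intros)
  then show ?thesis unfolding sums_def_le partial .
qed

theorem theorem5:
  fixes a b :: "nat \<Rightarrow> real"
  assumes "log_convex a"
    and "a 0 = 1" and "a 0 > a 1" and "\<And>k. k \<ge> 1 \<Longrightarrow> a k \<ge> a (k + 1)"
    and "a \<longlonglongrightarrow> 0"
    and "\<not> summable a"
    and "b 0 = 1 / a 0"
    and "\<And>k. k \<ge> 1 \<Longrightarrow> b k = - (1 / a 0) * (\<Sum>j<k. a (k - j) * b j)"
  shows "summable (\<lambda>k. \<bar>b k\<bar>) \<and> (\<Sum>k. \<bar>b k\<bar>) = 2"
proof -
  have nonneg: "\<And>k. a k \<ge> 0" using assms(1) unfolding log_convex_def by blast
  have "decseq a"
  proof (rule decseq_SucI)
    show "a (Suc k) \<le> a k" for k using assms(3) assms(4)[of k] by (cases k) auto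
  qed
  then have pos: "\<And>k. a k > 0"
    using positive_if_decseq_not_summable nonneg assms(6) by blast
  have inv: "convolution_inverse a b"
    using assms(2,7,8) by (intro convolution_inverseI_recursion) auto
  have nonpos: "\<And>k. k \<ge> 1 \<Longrightarrow> b k \<le> 0"
    using convolution_inverse_nonpos[OF assms(1) pos inv] .
  have "(\<lambda>N. \<Sum>j\<le>N. b j) \<longlonglongrightarrow> 0"
  proof (rule partial_sums_tendsto_zero_if_not_summable[OF nonneg assms(6) _ nonpos])
    show "(\<Sum>j\<le>N. b j) \<ge> 0" for N
      using \<open>decseq a\<close> pos inv nonpos by (rule convolution_inverse_partial_sums_nonneg)
    show "(\<Sum>i\<le>N. a i) * (\<Sum>j\<le>N. b j) \<le> 1" for N
      using nonneg inv nonpos by (rule convolution_inverse_partial_sums_bound)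
  qed
  then have "(\<lambda>k. \<bar>b k\<bar>) sums 2"
    using abs_sums_if_tail_nonpos[OF nonpos] assms(2,7) by fastforce
  then show ?thesis by (simp add: sums_iff)
qed

end
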